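(* Let $1\leq k\leq n$ and let $\Lambda_1,\dots,\Lambda_d\subset\mathbb{P}^n$ be $(k-1)$-dimensional linear subspaces satisfying $\mathrm{SP}(n-k)$. Let $1\leq r\leq d-2$ be an integer and let $(p_{r+1},\dots,p_{d-1})\in\Lambda_{r+1}\times\dots\times\Lambda_{d-1}$ be points such that $\mathrm{Span}(p_{r+1},\dots,p_{d-1})\cap\Lambda_d=\emptyset$. Then $\Lambda_d\subset\mathrm{Span}(\Lambda_1,\dots,\Lambda_r,p_{r+1},\dots,p_{d-1})$.
   Context: $(k-1)$-dimensional linear subspaces $\Lambda_1,\dots,\Lambda_d\subset\mathbb{P}^n$ (not necessarily distinct) satisfy $\mathrm{SP}(n-k)$ if for every $j\in\{1,\dots,d\}$ and every $(n-k)$-dimensional linear subspace $L\subset\mathbb{P}^n$ meeting each $\Lambda_i$ with $i\neq j$, $L$ also meets $\Lambda_j$. *)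

theory Defs
  imports "HOL-Analysis.Analysis"
begin

text \<open>Projective space P^n over the complex numbers is modelled as lines in
  complex^'n with CARD('n) = n+1.  A projective linear subspace of dimension m
  corresponds to a linear subspace of complex^'n of (vector space) dimension m+1.\<close>

definition proj_lin :: "nat \<Rightarrow> (complex ^ 'n) set \<Rightarrow> bool" where
  "proj_lin m V \<longleftrightarrow> vec.subspace V \<and> vec.dim V = m + 1"

definition meets :: "(complex ^ 'n) set \<Rightarrow> (complex ^ 'n) set \<Rightarrow> bool" where
  "meets V W \<longleftrightarrow> (\<exists>x. x \<noteq> 0 \<and> x \<in> V \<and> x \<in> W)"

text \<open>SP(m) for the family Lambda 0, ..., Lambda (d-1) (paper's Lambda_1..Lambda_d).\<close>
definition SP :: "nat \<Rightarrow> nat \<Rightarrow> (nat \<Rightarrow> (complex ^ 'n) set) \<Rightarrow> bool" where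
  "SP m d Lam \<longleftrightarrow> (\<forall>j<d. \<forall>L. proj_lin m L \<longrightarrow>
       (\<forall>i<d. i \<noteq> j \<longrightarrow> meets L (Lam i)) \<longrightarrow> meets L (Lam j))"

end

theory Submission
  imports Defs
begin

text \<open>Suppose \<open>\<Lambda>\<^sub>d\<close> is not contained in the span \<open>S\<close>. The span of the points \<open>p\<^sub>i\<close>
  misses \<open>\<Lambda>\<^sub>d\<close>; enlarge it inside \<open>S\<close>, still missing \<open>\<Lambda>\<^sub>d\<close>, until it meets each of
  \<open>\<Lambda>\<^sub>1, \<dots>, \<Lambda>\<^sub>r\<close>. This is always possible: if no vector of \<open>\<Lambda>\<^sub>j\<close> could be added to
  the current space \<open>Q\<close>, then \<open>\<Lambda>\<^sub>j \<subseteq> Q + \<Lambda>\<^sub>d\<close> and \<open>\<Lambda>\<^sub>j \<inter> Q = 0\<close>, so by counting dimensions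
  \<open>Q + \<Lambda>\<^sub>j = Q + \<Lambda>\<^sub>d\<close> and hence \<open>\<Lambda>\<^sub>d \<subseteq> S\<close>. The resulting space meets
  \<open>\<Lambda>\<^sub>1, \<dots>, \<Lambda>\<^sub>d\<^sub>-\<^sub>1\<close> but not \<open>\<Lambda>\<^sub>d\<close>; extended to a complement of \<open>\<Lambda>\<^sub>d\<close> it is an
  \<open>(n-k)\<close>-plane contradicting \<open>SP(n-k)\<close>.\<close>

lemma dim_span_Un_disjoint:
  fixes A B :: "('a::field ^ 'n) set"
  assumes "vec.subspace A" "vec.subspace B" "A \<inter> B \<subseteq> {0}"
  shows "vec.dim (vec.span (A \<union> B)) = vec.dim A + vec.dim B"
proof -
  have A: "vec.span A = A" and B: "vec.span B = B"
    using assms(1,2) by (simp_all add: vec.span_eq_iff)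
  have sum: "vec.span (A \<union> B) = {x + y |x y. x \<in> A \<and> y \<in> B}"
    unfolding vec.span_Un A B ..
  have "vec.dim (A \<inter> B) = 0"
    using assms(3) by simp
  then show ?thesis
    unfolding sum using vec.dim_sums_Int[OF assms(1,2)] by linarith
qed

lemma span_insert_disjoint:
  fixes Q W :: "('a::field ^ 'n) set"
  assumes "vec.subspace Q" "v \<notin> vec.span (Q \<union> W)" "Q \<inter> W \<subseteq> {0}"
  shows "vec.span (insert v Q) \<inter> W \<subseteq> {0}"
proof
  fix x assume x: "x \<in> vec.span (insert v Q) \<inter> W"
  have "vec.span Q = Q"
    using assms(1) by (simp add: vec.span_eq_iff)
  with x obtain c where c: "x - c *s v \<in> Q"
    using vec.span_breakdown_eq[of x v Q] by auto
  show "x \<in> {0}"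
  proof (cases "c = 0")
    case True
    then show ?thesis using c x assms(3) by auto
  next
    case False
    have "x \<in> vec.span (Q \<union> W)" "x - c *s v \<in> vec.span (Q \<union> W)"
      using x c by (auto intro: vec.span_base)
    then have "x - (x - c *s v) \<in> vec.span (Q \<union> W)"
      by (rule vec.span_diff)
    then have "c *s v \<in> vec.span (Q \<union> W)"
      by simp
    then have "inverse c *s (c *s v) \<in> vec.span (Q \<union> W)"
      by (rule vec.span_scale)
    then have "v \<in> vec.span (Q \<union> W)"
      using False by simp
    then show ?thesis
      using assms(2) by blast
  qed
qed

lemma exists_complement_superset:
  fixes Q W :: "('a::field ^ 'n) set"
  assumes "vec.subspace Q" "vec.subspace W" "Q \<inter> W \<subseteq> {0}" "vec.dim W + m = CARD('n)"
  shows "\<exists>L. vec.subspace L \<and> vec.dim L = m \<and> Q \<subseteq> L \<and> L \<inter> W \<subseteq> {0}"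
  using assms(1,3)
proof (induction "m - vec.dim Q" arbitrary: Q)
  case 0
  have "vec.dim (vec.span (Q \<union> W)) \<le> CARD('n)"
    by (rule dim_subset_UNIV_cart_gen)
  then have "vec.dim Q = m"
    using dim_span_Un_disjoint[OF "0.prems"(1) assms(2) "0.prems"(2)] "0.hyps" assms(4)
    by linarith
  then show ?case
    using "0.prems" by blast
next
  case (Suc t)
  have "vec.dim (vec.span (Q \<union> W)) < CARD('n)"
    using dim_span_Un_disjoint[OF Suc.prems(1) assms(2) Suc.prems(2)] Suc.hyps(2) assms(4)
    by linarith
  then have "vec.span (Q \<union> W) \<noteq> UNIV"
    by (metis less_irrefl vec.dim_span vec_dim_card)
  then obtain v where v: "v \<notin> vec.span (Q \<union> W)"
    by blast
  define Q' where "Q' = vec.span (insert v Q)"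
  have "v \<notin> vec.span Q"
    using v vec.span_mono[of Q "Q \<union> W"] by blast
  then have "vec.dim Q' = vec.dim Q + 1"
    unfolding Q'_def by (simp add: vec.dim_insert)
  then have "t = m - vec.dim Q'"
    using Suc.hyps(2) by linarith
  moreover have "vec.subspace Q'"
    unfolding Q'_def by simp
  moreover have "Q' \<inter> W \<subseteq> {0}"
    unfolding Q'_def by (rule span_insert_disjoint[OF Suc.prems(1) v Suc.prems(2)])
  ultimately have "\<exists>L. vec.subspace L \<and> vec.dim L = m \<and> Q' \<subseteq> L \<and> L \<inter> W \<subseteq> {0}"
    by (rule Suc.hyps(1))
  then obtain L where L: "vec.subspace L" "vec.dim L = m" "Q' \<subseteq> L" "L \<inter> W \<subseteq> {0}"
    by (elim exE conjE)
  have "Q \<subseteq> Q'"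
    unfolding Q'_def by (auto intro: vec.span_base)
  with L show ?case
    by (intro exI[of _ L]) auto
qed

lemma exists_disjoint_superspace_meeting:
  fixes Q \<Lambda> W S :: "('a::field ^ 'n) set"
  assumes "vec.subspace Q" "vec.subspace \<Lambda>" "vec.subspace W" "vec.subspace S"
    and "Q \<subseteq> S" "\<Lambda> \<subseteq> S" "Q \<inter> W \<subseteq> {0}" "vec.dim \<Lambda> = vec.dim W" "\<not> W \<subseteq> S"
  shows "\<exists>Q'. vec.subspace Q' \<and> Q \<subseteq> Q' \<and> Q' \<subseteq> S \<and> Q' \<inter> W \<subseteq> {0} \<and>
    (\<exists>x. x \<noteq> 0 \<and> x \<in> Q' \<and> x \<in> \<Lambda>)"
proof (cases "\<exists>x. x \<noteq> 0 \<and> x \<in> Q \<and> x \<in> \<Lambda>")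
  case True
  then show ?thesis
    using assms(1,5,7) by blast
next
  case False
  then have "Q \<inter> \<Lambda> \<subseteq> {0}"
    by blast
  show ?thesis
  proof (cases "\<Lambda> \<subseteq> vec.span (Q \<union> W)")
    case False
    then obtain q where q: "q \<in> \<Lambda>" "q \<notin> vec.span (Q \<union> W)"
      by blast
    define Q' where "Q' = vec.span (insert q Q)"
    have "q \<noteq> 0"
      using q(2) vec.span_zero by blast
    moreover have "Q' \<inter> W \<subseteq> {0}"
      unfolding Q'_def by (rule span_insert_disjoint[OF assms(1) q(2) assms(7)])
    moreover have "Q \<subseteq> Q'" "q \<in> Q'"
      unfolding Q'_def by (auto intro: vec.span_base)
    moreover have "insert q Q \<subseteq> S"
      using assms(5,6) q(1) by blast
    then have "Q' \<subseteq> S"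
      unfolding Q'_def using assms(4) by (rule vec.span_minimal)
    moreover have "vec.subspace Q'"
      unfolding Q'_def by simp
    ultimately show ?thesis
      using q(1) by blast
  next
    case True
    have "Q \<union> \<Lambda> \<subseteq> vec.span (Q \<union> W)"
      using True by (auto intro: vec.span_base)
    then have "vec.span (Q \<union> \<Lambda>) \<subseteq> vec.span (Q \<union> W)"
      using vec.subspace_span by (rule vec.span_minimal)
    moreover have "vec.dim (vec.span (Q \<union> \<Lambda>)) = vec.dim (vec.span (Q \<union> W))"
      using dim_span_Un_disjoint[OF assms(1,2) \<open>Q \<inter> \<Lambda> \<subseteq> {0}\<close>]
        dim_span_Un_disjoint[OF assms(1,3,7)] assms(8) by simp
    ultimately have "vec.span (Q \<union> \<Lambda>) = vec.span (Q \<union> W)"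
      by (simp add: vec.subspace_dim_equal)
    then have "W \<subseteq> vec.span (Q \<union> \<Lambda>)"
      by (metis sup_ge2 vec.span_superset subset_trans)
    moreover have "vec.span (Q \<union> \<Lambda>) \<subseteq> S"
      using assms(4-6) by (simp add: vec.span_minimal)
    ultimately show ?thesis
      using assms(9) by blast
  qed
qed

lemma exists_disjoint_superspace_meeting_all:
  fixes \<Lambda> :: "'i \<Rightarrow> ('a::field ^ 'n) set" and Q W S :: "('a ^ 'n) set"
  assumes "finite I"
    and "\<forall>i\<in>I. vec.subspace (\<Lambda> i) \<and> \<Lambda> i \<subseteq> S \<and> vec.dim (\<Lambda> i) = vec.dim W"
    and "vec.subspace Q" "vec.subspace W" "vec.subspace S"
    and "Q \<subseteq> S" "Q \<inter> W \<subseteq> {0}" "\<not> W \<subseteq> S"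
  shows "\<exists>Q'. vec.subspace Q' \<and> Q \<subseteq> Q' \<and> Q' \<subseteq> S \<and> Q' \<inter> W \<subseteq> {0} \<and>
    (\<forall>i\<in>I. \<exists>x. x \<noteq> 0 \<and> x \<in> Q' \<and> x \<in> \<Lambda> i)"
  using assms(1,2)
proof (induction I rule: finite_induct)
  case empty
  show ?case
    using assms(3,6,7) by (intro exI[of _ Q]) simp
next
  case (insert j I)
  then obtain Q1 where Q1: "vec.subspace Q1" "Q \<subseteq> Q1" "Q1 \<subseteq> S" "Q1 \<inter> W \<subseteq> {0}"
      "\<forall>i\<in>I. \<exists>x. x \<noteq> 0 \<and> x \<in> Q1 \<and> x \<in> \<Lambda> i"
    by auto
  have \<Lambda>j: "vec.subspace (\<Lambda> j)" "\<Lambda> j \<subseteq> S" "vec.dim (\<Lambda> j) = vec.dim W"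
    using insert.prems by auto
  obtain Q2 where Q2: "vec.subspace Q2" "Q1 \<subseteq> Q2" "Q2 \<subseteq> S" "Q2 \<inter> W \<subseteq> {0}"
      "\<exists>x. x \<noteq> 0 \<and> x \<in> Q2 \<and> x \<in> \<Lambda> j"
    using exists_disjoint_superspace_meeting[OF Q1(1) \<Lambda>j(1) assms(4,5) Q1(3) \<Lambda>j(2) Q1(4)
        \<Lambda>j(3) assms(8)]
    by blast
  have "\<forall>i\<in>insert j I. \<exists>x. x \<noteq> 0 \<and> x \<in> Q2 \<and> x \<in> \<Lambda> i"
    using Q1(5) Q2(2,5) by blast
  then show ?case
    using Q1(2) Q2(1-4) by (intro exI[of _ Q2]) auto
qed

lemma SP_subspace_meets:
  fixes Lam :: "nat \<Rightarrow> (complex ^ 'n) set"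
  assumes "CARD('n) = n + 1" "1 \<le> k" "k \<le> n" "SP (n - k) d Lam"
    and "j < d" "proj_lin (k - 1) (Lam j)" "vec.subspace Q"
    and "\<forall>i<d. i \<noteq> j \<longrightarrow> meets Q (Lam i)"
  shows "meets Q (Lam j)"
proof (rule ccontr)
  assume "\<not> meets Q (Lam j)"
  then have disjoint: "Q \<inter> Lam j \<subseteq> {0}"
    unfolding meets_def by blast
  have Lj: "vec.subspace (Lam j)" "vec.dim (Lam j) = k"
    using assms(2,6) unfolding proj_lin_def by auto
  then have "vec.dim (Lam j) + (n + 1 - k) = CARD('n)"
    using assms(1,3) by simp
  then obtain L where L: "vec.subspace L" "vec.dim L = n + 1 - k" "Q \<subseteq> L"
      "L \<inter> Lam j \<subseteq> {0}"
    by (elim exists_complement_superset[OF assms(7) Lj(1) disjoint, THEN exE] conjE)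
  have "proj_lin (n - k) L"
    unfolding proj_lin_def using L(1,2) assms(2,3) by simp
  moreover have "meets L (Lam i)" if "i < d" "i \<noteq> j" for i
  proof -
    have "meets Q (Lam i)"
      using assms(8) that by simp
    then show ?thesis
      using L(3) unfolding meets_def by blast
  qed
  ultimately have "meets L (Lam j)"
    by (rule assms(4)[unfolded SP_def, rule_format, OF assms(5)])
  then show False
    using L(4) unfolding meets_def by blast
qed

theorem lemma2p10:
  fixes Lam :: "nat \<Rightarrow> (complex ^ 'n) set"
    and p :: "nat \<Rightarrow> complex ^ 'n"
    and n k d r :: nat
  assumes hn: "CARD('n) = n + 1"
    and hk: "1 \<le> k" "k \<le> n"
    and hLam: "\<forall>i<d. proj_lin (k - 1) (Lam i)"
    and hSP: "SP (n - k) d Lam"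
    and hr: "1 \<le> r" "r + 2 \<le> d"
    and hp: "\<forall>i. r \<le> i \<and> i < d - 1 \<longrightarrow> p i \<noteq> 0 \<and> p i \<in> Lam i"
    and hdisj: "\<not> meets (vec.span (p ` {r..<d - 1})) (Lam (d - 1))"
  shows "Lam (d - 1) \<subseteq> vec.span ((\<Union>i<r. Lam i) \<union> p ` {r..<d - 1})"
proof (rule ccontr)
  define S where "S = vec.span ((\<Union>i<r. Lam i) \<union> p ` {r..<d - 1})"
  define Q0 where "Q0 = vec.span (p ` {r..<d - 1})"
  assume "\<not> Lam (d - 1) \<subseteq> S"
  have Lam: "vec.subspace (Lam i) \<and> vec.dim (Lam i) = k" if "i < d" for i
    using hLam that hk unfolding proj_lin_def by auto
  have "\<forall>i\<in>{..<r}. vec.subspace (Lam i) \<and> Lam i \<subseteq> S \<and>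
      vec.dim (Lam i) = vec.dim (Lam (d - 1))"
    using Lam hr unfolding S_def by (auto intro: vec.span_base)
  moreover have "vec.subspace Q0" "vec.subspace (Lam (d - 1))" "vec.subspace S" "Q0 \<subseteq> S"
      "Q0 \<inter> Lam (d - 1) \<subseteq> {0}"
    using Lam hr hdisj unfolding Q0_def S_def meets_def by (auto simp: vec.span_mono)
  ultimately obtain Q where Q: "vec.subspace Q" "Q0 \<subseteq> Q" "Q \<subseteq> S" "Q \<inter> Lam (d - 1) \<subseteq> {0}"
      "\<forall>i\<in>{..<r}. \<exists>x. x \<noteq> 0 \<and> x \<in> Q \<and> x \<in> Lam i"
    using \<open>\<not> Lam (d - 1) \<subseteq> S\<close>
    by (elim exists_disjoint_superspace_meeting_all[OF finite_lessThan, THEN exE] conjE)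
  have "d - 1 < d" "proj_lin (k - 1) (Lam (d - 1))"
    using hLam hr by simp_all
  moreover have "\<forall>i<d. i \<noteq> d - 1 \<longrightarrow> meets Q (Lam i)"
  proof (intro allI impI)
    fix i assume "i < d" "i \<noteq> d - 1"
    then have "i < d - 1"
      by linarith
    show "meets Q (Lam i)"
    proof (cases "i < r")
      case True
      then show ?thesis
        using Q(5) by (simp add: meets_def)
    next
      case False
      then have "p i \<in> Q0" "p i \<noteq> 0" "p i \<in> Lam i"
        unfolding Q0_def using hp \<open>i < d - 1\<close> by (auto intro: vec.span_base)
      then show ?thesis
        using Q(2) unfolding meets_def by blast
    qed
  qed
  ultimately have "meets Q (Lam (d - 1))"
    by (rule SP_subspace_meets[OF hn hk hSP _ _ Q(1)])
  then show False
    using Q(4) unfolding meets_def by blast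
qed

end
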